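(* Under the hypotheses of Theorem 5.2 (stated below), let $(u_n)_{n\in\mathbb N}$ and $(v_n)_{n\in\mathbb N}$ be two positive solutions with the same $x_0$ (so set $u_0=v_0=x_0$), and let $\varepsilon_n=u_n-v_n$ for $n\ge0$. Then $2|\varepsilon_n|\le|\varepsilon_{n+1}|+|\varepsilon_{n-1}|$ for all $n\in\mathbb N$. Hypotheses: $\ell_n>0$, $\sigma_{n,0}>0$, $\kappa_n\in\mathbb R$, $\sigma_{n,\pm1}\ge0$ for $n\in\mathbb N$; $\sigma_n=\max(\sigma_{n,-1},\sigma_{n,1})$; $\mathbb N=\mathbb N_a\cup\mathbb N_b$ disjointly with $2\sigma_n\le\sigma_{n,0}$ for $n\in\mathbb N_a$ and with $\sigma_n\le\sigma_{n,0}<2\sigma_n$ and $-2(\sigma_{n,0}-\sigma_n)\sqrt{\ell_n}\le\kappa_n\sqrt{2\sigma_n-\sigma_{n,0}}$ for $n\in\mathbb N_b$; and, if $1\in\mathbb N_b$, $-2(\sigma_{1,0}-\sigma_1)\sqrt{\ell_1}\le(\sigma_{1,-1}x_0+\kappa_1)\sqrt{2\sigma_1-\sigma_{1,0}}$.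
   Context: $\mathbb N=\{1,2,3,\dots\}$. A positive solution with given $x_0\in\mathbb R$ is a sequence $(x_n)_{n\in\mathbb N}$ of positive reals satisfying $\ell_n = x_n(\sigma_{n,1}x_{n+1}+\sigma_{n,0}x_n+\sigma_{n,-1}x_{n-1})+\kappa_n x_n$ for all $n\in\mathbb N$. *)

theory Defs
  imports Complex_Main
begin

text \<open>Sequences indexed by the positive integers are modelled as functions nat => real;
  only the values at n >= 1 matter. The solution sequence x is extended by x 0 = x0.\<close>

definition positive_solution ::
  "(nat \<Rightarrow> real) \<Rightarrow> (nat \<Rightarrow> real) \<Rightarrow> (nat \<Rightarrow> real) \<Rightarrow> (nat \<Rightarrow> real) \<Rightarrow> (nat \<Rightarrow> real)
   \<Rightarrow> real \<Rightarrow> (nat \<Rightarrow> real) \<Rightarrow> bool" where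
  "positive_solution l sp s0 sm \<kappa> x0 x \<longleftrightarrow>
     x 0 = x0 \<and>
     (\<forall>n\<ge>1. x n > 0) \<and>
     (\<forall>n\<ge>1. l n = x n * (sp n * x (n+1) + s0 n * x n + sm n * x (n-1)) + \<kappa> n * x n)"

end

theory Submission
  imports Defs
begin

text \<open>Dividing the recurrence at n by x(n) and subtracting it for u and v gives
  eps(n) (l(n) / (u(n) v(n)) + sigma(n,0)) = -(sigma(n,1) eps(n+1) + sigma(n,-1) eps(n-1)).
  The hypotheses on kappa force x(n)^2 (2 sigma(n) - sigma(n,0)) <= l(n) for every positive
  solution x, hence l(n) / (u(n) v(n)) + sigma(n,0) >= 2 sigma(n), and the claim follows from
  the triangle inequality.\<close>

lemma sq_le_of_quadratic_le:
  fixes x l s d k :: real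
  assumes x: "x > 0" and s: "s > 0" and d: "d > 0" and l: "l \<ge> 0"
    and quadratic: "s * x\<^sup>2 + k * x \<le> l"
    and drift: "(d - s) * sqrt l \<le> k * sqrt d"
  shows "d * x\<^sup>2 \<le> l"
proof (rule ccontr)
  define a y where "a = sqrt l" and "y = x * sqrt d"
  have y_sq: "y\<^sup>2 = d * x\<^sup>2"
    using d by (simp add: y_def power_mult_distrib)
  have y_pos: "y > 0"
    using x d by (simp add: y_def)
  assume "\<not> ?thesis"
  then have "l < y\<^sup>2"
    using y_sq by simp
  then have ya: "a < y"
    using real_sqrt_less_mono[of l "y\<^sup>2"] y_pos by (simp add: a_def)
  have a_nonneg: "a \<ge> 0"
    using l by (simp add: a_def)
  have "d * l = d * a * a"
    using l by (simp add: a_def)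
  also have "\<dots> \<le> d * a * y"
    using d a_nonneg ya by (intro mult_left_mono) auto
  also have "\<dots> < s * y * (y - a) + d * a * y"
    using s y_pos ya by simp
  also have "\<dots> = s * y\<^sup>2 + (d - s) * a * y"
    by (simp add: power2_eq_square algebra_simps)
  also have "\<dots> \<le> s * y\<^sup>2 + k * sqrt d * y"
    using drift y_pos by (simp add: a_def)
  also have "\<dots> = d * (s * x\<^sup>2 + k * x)"
    using d by (simp add: y_sq y_def algebra_simps)
  also have "\<dots> \<le> d * l"
    using quadratic d by simp
  finally show False
    by simp
qed

lemma positive_solution_quadratic_le:
  assumes sol: "positive_solution l sp s0 sm \<kappa> x0 x" and n: "n \<ge> 1"
    and sp: "sp n \<ge> 0" and sm: "sm n \<ge> 0"
  shows "s0 n * (x n)\<^sup>2 + (if n = 1 then sm 1 * x0 + \<kappa> 1 else \<kappa> n) * x n \<le> l n"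
proof -
  have xn: "x n > 0" and next_pos: "x (n+1) > 0" and x_0: "x 0 = x0"
    and eq: "l n = x n * (sp n * x (n+1) + s0 n * x n + sm n * x (n-1)) + \<kappa> n * x n"
    using sol n unfolding positive_solution_def by auto
  have next_term: "0 \<le> x n * (sp n * x (n+1))"
    using xn next_pos sp by simp
  show ?thesis
  proof (cases "n = 1")
    case True
    with eq next_term x_0 show ?thesis
      by (simp add: power2_eq_square algebra_simps)
  next
    case False
    then have "x (n-1) > 0"
      using sol n unfolding positive_solution_def by auto
    then have "0 \<le> x n * (sm n * x (n-1))"
      using xn sm by simp
    with False eq next_term show ?thesis
      by (simp add: power2_eq_square algebra_simps)
  qed
qed

lemma positive_solution_sq_bound:
  fixes \<sigma> :: real
  assumes sol: "positive_solution l sp s0 sm \<kappa> x0 x" and n: "n \<ge> 1"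
    and s0: "s0 n > 0" and sp: "sp n \<ge> 0" and sm: "sm n \<ge> 0" and l: "l n \<ge> 0"
    and gap: "s0 n < 2 * \<sigma>"
    and drift: "- 2 * (s0 n - \<sigma>) * sqrt (l n)
      \<le> (if n = 1 then sm 1 * x0 + \<kappa> 1 else \<kappa> n) * sqrt (2 * \<sigma> - s0 n)"
  shows "(x n)\<^sup>2 * (2 * \<sigma> - s0 n) \<le> l n"
proof -
  have "x n > 0"
    using sol n unfolding positive_solution_def by auto
  moreover have "(2 * \<sigma> - s0 n - s0 n) * sqrt (l n)
      \<le> (if n = 1 then sm 1 * x0 + \<kappa> 1 else \<kappa> n) * sqrt (2 * \<sigma> - s0 n)"
    using drift by (simp add: algebra_simps)
  ultimately have "(2 * \<sigma> - s0 n) * (x n)\<^sup>2 \<le> l n"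
    using s0 gap l positive_solution_quadratic_le[OF sol n sp sm]
    by (intro sq_le_of_quadratic_le) auto
  then show ?thesis
    by (simp add: mult.commute)
qed

lemma mult_le_of_sq_le:
  fixes u v d l :: real
  assumes "0 \<le> u * v" and "l \<ge> 0" and "u\<^sup>2 * d \<le> l" and "v\<^sup>2 * d \<le> l"
  shows "u * v * d \<le> l"
proof (cases "d \<ge> 0")
  case True
  have "2 * (u * v) \<le> u\<^sup>2 + v\<^sup>2"
    using sum_squares_bound[of u v] by (simp add: power2_eq_square)
  then have "2 * (u * v) * d \<le> (u\<^sup>2 + v\<^sup>2) * d"
    using True by (rule mult_right_mono)
  with assms show ?thesis
    by (simp add: algebra_simps)
next
  case False
  with assms show ?thesis
    by (smt (verit) mult_nonneg_nonpos)
qed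

lemma recurrence_difference_identity:
  fixes l a b c k u u1 um v v1 vm :: real
  assumes "l = u * (a * u1 + b * u + c * um) + k * u"
    and "l = v * (a * v1 + b * v + c * vm) + k * v"
  shows "- (u - v) * (l + u * v * b) = u * v * (a * (u1 - v1) + c * (um - vm))"
  using assms by algebra

lemma two_abs_le_of_difference_identity:
  fixes l p a b c e e1 em :: real
  assumes p: "p > 0" and pos: "l + p * b > 0" and a: "a \<ge> 0" and c: "c \<ge> 0"
    and bound: "p * (2 * max a c - b) \<le> l"
    and identity: "- e * (l + p * b) = p * (a * e1 + c * em)"
  shows "2 * \<bar>e\<bar> \<le> \<bar>e1\<bar> + \<bar>em\<bar>"
proof -
  define \<sigma> where "\<sigma> = max a c"
  have "\<bar>a * e1 + c * em\<bar> \<le> \<sigma> * (\<bar>e1\<bar> + \<bar>em\<bar>)"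
    using a c abs_triangle_ineq[of "a * e1" "c * em"]
      mult_right_mono[of a \<sigma> "\<bar>e1\<bar>"] mult_right_mono[of c \<sigma> "\<bar>em\<bar>"]
    by (simp add: \<sigma>_def abs_mult distrib_left)
  then have "\<bar>e\<bar> * (l + p * b) \<le> p * (\<sigma> * (\<bar>e1\<bar> + \<bar>em\<bar>))"
    using identity[THEN arg_cong[of _ _ abs]] p pos
    by (simp add: abs_mult mult_left_mono)
  moreover have "\<bar>e\<bar> * (p * (2 * \<sigma>)) \<le> \<bar>e\<bar> * (l + p * b)"
    using bound by (intro mult_left_mono) (auto simp: \<sigma>_def algebra_simps)
  ultimately have "p * (\<sigma> * (2 * \<bar>e\<bar>)) \<le> p * (\<sigma> * (\<bar>e1\<bar> + \<bar>em\<bar>))"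
    by (simp add: algebra_simps)
  then have scaled: "\<sigma> * (2 * \<bar>e\<bar>) \<le> \<sigma> * (\<bar>e1\<bar> + \<bar>em\<bar>)"
    using p by simp
  show ?thesis
  proof (cases "\<sigma> > 0")
    case True
    with scaled show ?thesis by simp
  next
    case False
    then have "a = 0" "c = 0"
      using a c by (auto simp: \<sigma>_def)
    with identity pos have "e = 0"
      by simp
    then show ?thesis by simp
  qed
qed

theorem mainTheorem5:
  fixes l sp s0 sm \<kappa> :: "nat \<Rightarrow> real" and x0 :: real
    and Na Nb :: "nat set" and u v :: "nat \<Rightarrow> real"
  assumes l_pos: "\<And>n. n \<ge> 1 \<Longrightarrow> l n > 0"
    and s0_pos: "\<And>n. n \<ge> 1 \<Longrightarrow> s0 n > 0"
    and sp_nonneg: "\<And>n. n \<ge> 1 \<Longrightarrow> sp n \<ge> 0"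
    and sm_nonneg: "\<And>n. n \<ge> 1 \<Longrightarrow> sm n \<ge> 0"
    and partition: "Na \<union> Nb = {1..}" "Na \<inter> Nb = {}"
    and Na_cond: "\<And>n. n \<in> Na \<Longrightarrow> 2 * max (sm n) (sp n) \<le> s0 n"
    and Nb_cond1: "\<And>n. n \<in> Nb \<Longrightarrow> max (sm n) (sp n) \<le> s0 n \<and> s0 n < 2 * max (sm n) (sp n)"
    and Nb_cond2: "\<And>n. n \<in> Nb \<Longrightarrow>
        - 2 * (s0 n - max (sm n) (sp n)) * sqrt (l n) \<le> \<kappa> n * sqrt (2 * max (sm n) (sp n) - s0 n)"
    and first: "1 \<in> Nb \<Longrightarrow>
        - 2 * (s0 1 - max (sm 1) (sp 1)) * sqrt (l 1) \<le> (sm 1 * x0 + \<kappa> 1) * sqrt (2 * max (sm 1) (sp 1) - s0 1)"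
    and u_sol: "positive_solution l sp s0 sm \<kappa> x0 u"
    and v_sol: "positive_solution l sp s0 sm \<kappa> x0 v"
  shows "\<forall>n\<ge>1. 2 * \<bar>u n - v n\<bar> \<le> \<bar>u (n+1) - v (n+1)\<bar> + \<bar>u (n-1) - v (n-1)\<bar>"
proof (intro allI impI)
  fix n :: nat
  assume n: "n \<ge> 1"
  define \<sigma> where "\<sigma> = max (sm n) (sp n)"
  have sq_bound: "(x n)\<^sup>2 * (2 * \<sigma> - s0 n) \<le> l n"
    if sol: "positive_solution l sp s0 sm \<kappa> x0 x" for x
  proof (cases "n \<in> Nb")
    case True
    show ?thesis
      using positive_solution_sq_bound[OF sol n s0_pos sp_nonneg sm_nonneg, of \<sigma>]
        Nb_cond1[OF True] Nb_cond2[OF True] first True n l_pos[OF n]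
      by (cases "n = 1") (auto simp: \<sigma>_def)
  next
    case False
    with partition n Na_cond have "2 * \<sigma> - s0 n \<le> 0"
      by (auto simp: \<sigma>_def)
    with l_pos[OF n] show ?thesis
      by (smt (verit) mult_nonneg_nonpos zero_le_power2)
  qed
  have un: "u n > 0" and vn: "v n > 0"
    and u_eq: "l n = u n * (sp n * u (n+1) + s0 n * u n + sm n * u (n-1)) + \<kappa> n * u n"
    and v_eq: "l n = v n * (sp n * v (n+1) + s0 n * v n + sm n * v (n-1)) + \<kappa> n * v n"
    using u_sol v_sol n unfolding positive_solution_def by auto
  have "u n * v n * (2 * max (sp n) (sm n) - s0 n) \<le> l n"
    using mult_le_of_sq_le[OF _ _ sq_bound[OF u_sol] sq_bound[OF v_sol]] un vn l_pos[OF n]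
    by (simp add: \<sigma>_def max.commute less_imp_le)
  then show "2 * \<bar>u n - v n\<bar> \<le> \<bar>u (n+1) - v (n+1)\<bar> + \<bar>u (n-1) - v (n-1)\<bar>"
    using recurrence_difference_identity[OF u_eq v_eq] un vn l_pos[OF n] s0_pos[OF n]
      sp_nonneg[OF n] sm_nonneg[OF n]
      add_pos_pos[OF l_pos[OF n] mult_pos_pos[OF mult_pos_pos[OF un vn] s0_pos[OF n]]]
    by (intro two_abs_le_of_difference_identity[where l = "l n" and p = "u n * v n"]) auto
qed

end
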